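(* Let $N\ge1$, $0<\alpha\le2$, $\gamma>0$, $p\in[0,1]$, and let $Y\in\mathrm{Herm}(N)$ be an invariant random matrix with characteristic function $$\mathbb E[\exp(i\mathrm{Tr}\,YS)]=\exp\big(-\gamma[p\,\nu_\alpha(\mathrm{Tr}\,S/\sqrt N)+(1-p)\,\nu_\alpha(-\mathrm{Tr}\,S/\sqrt N)]\big),\quad S\in\mathrm{Herm}(N).$$ Then $Y=yI_N/\sqrt N$, where $y$ is a real random variable with the Lévy $\alpha$-stable law given by $\mathbb E[\exp(iyk)]=\exp(-\gamma[p\,\nu_\alpha(k)+(1-p)\,\nu_\alpha(-k)])$, $k\in\mathbb R$.
   Context: $\nu_\alpha(u)=|u|^\alpha(1-i\,\mathrm{sgn}(u)\tan\frac{\pi\alpha}2)$ for $\alpha\ne1$ and $\nu_1(u)=|u|(1+\frac{2i}\pi\mathrm{sgn}(u)\log|u|)$. An invariant random matrix satisfies $UYU^\dagger\overset d=Y$ for all unitary $U$. The equality $Y=yI_N/\sqrt N$ is in distribution. *)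

theory Defs
  imports "HOL-Probability.Probability"
begin

definition cadj :: "complex^'n^'n \<Rightarrow> complex^'n^'n" where
  "cadj A = (\<chi> i j. cnj (A $ j $ i))"

definition hermitian :: "complex^'n^'n \<Rightarrow> bool" where
  "hermitian A \<longleftrightarrow> cadj A = A"

definition unitary :: "complex^'n^'n \<Rightarrow> bool" where
  "unitary U \<longleftrightarrow> cadj U ** U = mat 1 \<and> U ** cadj U = mat 1"

definition nu :: "real \<Rightarrow> real \<Rightarrow> complex" where
  "nu \<alpha> u = (if \<alpha> = 1
     then complex_of_real \<bar>u\<bar> * (1 + (2 * \<i> / pi) * complex_of_real (sgn u * ln \<bar>u\<bar>))
     else complex_of_real (\<bar>u\<bar> powr \<alpha>) * (1 - \<i> * complex_of_real (sgn u * tan (pi * \<alpha> / 2))))"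

end

theory Submission
  imports Defs
begin

(* For a traceless Hermitian S the assumed characteristic function equals exp 0 = 1 on the
   whole line t S, so the mean of 1 - cos (t Re tr (Y S)) vanishes for every t, and taking
   t = 1/(k+1) forces Re tr (Y S) = 0 almost surely.  Finitely many traceless Hermitian S span
   all of them over the reals; a Hermitian matrix orthogonal to all of them is scalar, so
   Y = (tr Y / N) I almost surely.  The law of y = tr Y / sqrt N is then read off the
   characteristic function at S = k I / sqrt N. *)

lemma (in prob_space) AE_cos_eq_1_if_integral_iexp_eq_1:
  assumes "(CLINT \<omega>|M. iexp (f \<omega>)) = 1"
  shows "AE \<omega> in M. cos (f \<omega>) = 1"
proof -
  have "integrable M (\<lambda>\<omega>. iexp (f \<omega>))"
    using assms not_integrable_integral_eq by fastforce
  then have int_cos: "integrable M (\<lambda>\<omega>. cos (f \<omega>))"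
    and "(LINT \<omega>|M. cos (f \<omega>)) = 1"
    using integrable_Re integral_Re assms by (fastforce simp: Re_exp)+
  then have "(LINT \<omega>|M. 1 - cos (f \<omega>)) = 0"
    by (simp add: prob_space)
  then have "AE \<omega> in M. 1 - cos (f \<omega>) = 0"
    using int_cos by (subst (asm) integral_nonneg_eq_0_iff_AE) auto
  then show ?thesis
    by auto
qed

lemma eq_0_if_cos_divide_Suc_eq_1:
  fixes x :: real
  assumes "\<forall>k::nat. cos (x / real (Suc k)) = 1"
  shows "x = 0"
proof -
  define k where "k = nat \<lceil>\<bar>x\<bar>\<rceil>"
  obtain n :: int where n: "x / real (Suc k) = n * 2 * pi"
    using assms cos_one_2pi_int[of "x / real (Suc k)"] by auto
  have "\<bar>x / real (Suc k)\<bar> < 1"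
    unfolding k_def by (simp add: divide_less_eq) linarith
  moreover have "\<bar>x / real (Suc k)\<bar> = \<bar>real_of_int n\<bar> * 2 * pi"
    unfolding n by (simp add: abs_mult)
  ultimately have "\<bar>real_of_int n\<bar> * 2 * pi < 1"
    by linarith
  moreover have "\<bar>real_of_int n\<bar> * 1 \<le> \<bar>real_of_int n\<bar> * (2 * pi)"
    using pi_gt3 by (intro mult_left_mono) auto
  ultimately have "\<bar>real_of_int n\<bar> < 1"
    by simp
  then have "n = 0"
    by linarith
  then show ?thesis
    using n by simp
qed

lemma (in prob_space) AE_eq_0_if_integral_iexp_eq_1:
  assumes "\<And>t. (CLINT \<omega>|M. iexp (t * X \<omega>)) = 1"
  shows "AE \<omega> in M. X \<omega> = 0"
proof -
  have "AE \<omega> in M. cos (X \<omega> / real (Suc k)) = 1" for k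
    using AE_cos_eq_1_if_integral_iexp_eq_1[OF assms[of "1 / real (Suc k)"]] by simp
  then have "AE \<omega> in M. \<forall>k::nat. cos (X \<omega> / real (Suc k)) = 1"
    by (simp add: AE_all_countable)
  then show ?thesis
    by eventually_elim (rule eq_0_if_cos_divide_Suc_eq_1)
qed

lemma distr_eq_distr_distr_if_AE_eq_comp:
  assumes "AE \<omega> in M. Y \<omega> = F (g \<omega>)"
    and "Y \<in> M \<rightarrow>\<^sub>M N" "g \<in> M \<rightarrow>\<^sub>M K" "F \<in> K \<rightarrow>\<^sub>M N"
  shows "distr M N Y = distr (distr M K g) N F"
proof -
  have "distr (distr M K g) N F = distr M N (\<lambda>\<omega>. F (g \<omega>))"
    using assms by (simp add: distr_distr comp_def)
  also have "\<dots> = distr M N Y"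
    using assms by (intro distr_cong_AE) (auto simp: eq_commute)
  finally show ?thesis ..
qed

lemma trace_scaleR:
  fixes A :: "'a::real_algebra_1^'n^'n"
  shows "trace (t *\<^sub>R A) = t *\<^sub>R trace A"
  by (simp add: trace_def scaleR_sum_right)

lemma matrix_mult_scaleR_right:
  fixes A B :: "'a::real_algebra_1^'n^'n"
  shows "A ** (t *\<^sub>R B) = t *\<^sub>R (A ** B)"
  by (simp add: matrix_matrix_mult_def vec_eq_iff scaleR_sum_right)

lemma hermitian_vec_lambda_iff: "hermitian (\<chi> a b. f a b) \<longleftrightarrow> (\<forall>a b. cnj (f b a) = f a b)"
  unfolding hermitian_def cadj_def by (simp add: vec_eq_iff)

lemma hermitian_scaleR: "hermitian S \<Longrightarrow> hermitian (t *\<^sub>R S)"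
  by (simp add: hermitian_def cadj_def vec_eq_iff del: scaleR_conv_of_real)

lemma hermitian_mat_1: "hermitian (mat 1)"
  by (simp add: hermitian_def cadj_def mat_def vec_eq_iff)

definition offdiag_hermitian :: "'n \<Rightarrow> 'n \<Rightarrow> complex \<Rightarrow> complex^'n^'n" where
  "offdiag_hermitian i j c =
     (\<chi> a b. (if a = j \<and> b = i then c else 0) + (if a = i \<and> b = j then cnj c else 0))"

definition diag_difference :: "'n \<Rightarrow> 'n \<Rightarrow> complex^'n^'n" where
  "diag_difference i j =
     (\<chi> a b. if a = b then (if a = i then 1 else 0) - (if a = j then 1 else 0) else 0)"

text \<open>These matrices span the traceless Hermitian matrices as a real vector space.\<close>
definition traceless_hermitian_probes :: "(complex^'n^'n) set" where
  "traceless_hermitian_probes = (\<Union>(i, j) \<in> {(i, j). i \<noteq> j}.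
     {offdiag_hermitian i j 1, offdiag_hermitian i j \<i>, diag_difference i j})"

lemma hermitian_offdiag_hermitian: "hermitian (offdiag_hermitian i j c)"
  unfolding offdiag_hermitian_def hermitian_vec_lambda_iff
  by (simp only: complex_cnj_add if_distrib[of cnj] complex_cnj_cnj complex_cnj_zero
      conj_commute add.commute) blast

lemma hermitian_diag_difference: "hermitian (diag_difference i j)"
  unfolding diag_difference_def hermitian_vec_lambda_iff
  by auto

lemma trace_offdiag_hermitian: "i \<noteq> j \<Longrightarrow> trace (offdiag_hermitian i j c) = 0"
  by (auto simp: trace_def offdiag_hermitian_def intro!: sum.neutral)

lemma trace_diag_difference: "trace (diag_difference i j) = 0"
  by (simp add: trace_def diag_difference_def sum_subtractf)

lemma trace_matrix_mult_offdiag_hermitian: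
  "trace (A ** offdiag_hermitian i j c) = A $ i $ j * c + A $ j $ i * cnj c"
  by (simp add: trace_def offdiag_hermitian_def matrix_matrix_mult_def distrib_left sum.distrib
      if_if_eq_conj[symmetric] if_distrib[where f="\<lambda>x. _ * x"] cong: if_cong)

lemma trace_matrix_mult_diag_difference:
  "trace (A ** diag_difference i j) = A $ i $ i - A $ j $ j"
  by (simp add: trace_def diag_difference_def matrix_matrix_mult_def right_diff_distrib
      sum_subtractf if_distrib[where f="\<lambda>x. _ * x"] cong: if_cong)

lemma finite_traceless_hermitian_probes: "finite traceless_hermitian_probes"
  by (simp add: traceless_hermitian_probes_def)

lemma traceless_hermitian_probesD:
  "S \<in> traceless_hermitian_probes \<Longrightarrow> hermitian S \<and> trace S = 0"
  by (auto simp: traceless_hermitian_probes_def hermitian_offdiag_hermitian hermitian_diag_difference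
      trace_offdiag_hermitian trace_diag_difference)

lemma hermitian_eq_scalar_if_orthogonal_to_probes:
  fixes A :: "complex^'n^'n"
  assumes herm: "hermitian A"
    and orth: "\<forall>S \<in> traceless_hermitian_probes. Re (trace (A ** S)) = 0"
  shows "A = (Re (trace A) / real CARD('n)) *\<^sub>R mat 1"
proof -
  have cnj_A: "A $ j $ i = cnj (A $ i $ j)" for i j
    using arg_cong[OF herm[unfolded hermitian_def], of "\<lambda>B. B $ j $ i"] by (simp add: cadj_def)
  have probe: "Re (trace (A ** S)) = 0"
    if "S \<in> {offdiag_hermitian i j 1, offdiag_hermitian i j \<i>, diag_difference i j}" "i \<noteq> j"
    for S i j
    using orth that unfolding traceless_hermitian_probes_def by blast
  have off_diag: "A $ i $ j = 0" if "i \<noteq> j" for i j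
    using probe[of "offdiag_hermitian i j 1" i j] probe[of "offdiag_hermitian i j \<i>" i j] that
    by (simp add: trace_matrix_mult_offdiag_hermitian cnj_A[of i j] complex_eq_iff)
  have diag: "A $ i $ i = of_real (Re (trace A) / real CARD('n))" for i
  proof -
    have Re_diag_const: "Re (A $ j $ j) = Re (A $ i $ i)" for j
      using probe[of "diag_difference i j" i j]
      by (cases "i = j") (simp_all add: trace_matrix_mult_diag_difference)
    have "Re (trace A) = (\<Sum>j::'n\<in>UNIV. Re (A $ i $ i))"
      unfolding trace_def Re_sum by (intro sum.cong refl Re_diag_const)
    then have "Re (trace A) = real CARD('n) * Re (A $ i $ i)"
      by simp
    moreover have "Im (A $ i $ i) = 0"
      using cnj_A[of i i] by (simp add: complex_eq_iff)
    ultimately show ?thesis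
      by (simp add: complex_eq_iff)
  qed
  have "A $ i $ j = ((Re (trace A) / real CARD('n)) *\<^sub>R mat 1) $ i $ j" for i j
    by (cases "i = j") (simp_all add: mat_def off_diag diag of_real_def del: scaleR_conv_of_real)
  then show ?thesis
    by (simp add: vec_eq_iff)
qed

lemma borel_measurable_Re_trace [measurable (raw)]:
  fixes Y :: "'a \<Rightarrow> complex^'n^'n"
  shows "Y \<in> borel_measurable M \<Longrightarrow> (\<lambda>\<omega>. Re (trace (Y \<omega>))) \<in> borel_measurable M"
  by (rule borel_measurable_continuous_on[where f = "\<lambda>A. Re (trace A)"])
    (auto simp: trace_def intro!: continuous_intros)

lemma (in prob_space) AE_scalar_if_char_depends_only_on_trace:
  fixes Y :: "'a \<Rightarrow> complex^'n^'n" and \<phi> :: "real \<Rightarrow> complex"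
  assumes herm: "AE \<omega> in M. hermitian (Y \<omega>)"
    and char: "\<And>S. hermitian S \<Longrightarrow>
      (CLINT \<omega>|M. iexp (Re (trace (Y \<omega> ** S)))) = \<phi> (Re (trace S))"
    and "\<phi> 0 = 1"
  shows "AE \<omega> in M. Y \<omega> = (Re (trace (Y \<omega>)) / real CARD('n)) *\<^sub>R mat 1"
proof -
  have "AE \<omega> in M. Re (trace (Y \<omega> ** S)) = 0" if "S \<in> traceless_hermitian_probes" for S
  proof (rule AE_eq_0_if_integral_iexp_eq_1)
    fix t
    have "hermitian S" "trace S = 0"
      using traceless_hermitian_probesD[OF that] by simp_all
    then show "(CLINT \<omega>|M. iexp (t * Re (trace (Y \<omega> ** S)))) = 1"
      using char[OF hermitian_scaleR, of S t] \<open>\<phi> 0 = 1\<close>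
      by (simp add: matrix_mult_scaleR_right trace_scaleR)
  qed
  then have "AE \<omega> in M. \<forall>S \<in> traceless_hermitian_probes. Re (trace (Y \<omega> ** S)) = 0"
    by (rule AE_finite_allI[OF finite_traceless_hermitian_probes])
  with herm show ?thesis
    by eventually_elim (rule hermitian_eq_scalar_if_orthogonal_to_probes)
qed

lemma (in prob_space) char_distr_scaled_trace:
  fixes Y :: "'a \<Rightarrow> complex^'n^'n"
  assumes "Y \<in> borel_measurable M"
  shows "char (distr M borel (\<lambda>\<omega>. c * Re (trace (Y \<omega>)))) k =
    (CLINT \<omega>|M. iexp (Re (trace (Y \<omega> ** ((k * c) *\<^sub>R mat 1)))))"
  using assms by (simp add: char_def integral_distr matrix_mult_scaleR_right trace_scaleR mult.assoc)

lemma nu_0: "nu \<alpha> 0 = 0"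
  by (simp add: nu_def)

theorem corollary4p8:
  fixes M :: "'a measure" and Y :: "'a \<Rightarrow> complex^'n^'n"
    and \<alpha> \<gamma> p :: real
  assumes "prob_space M"
    and "Y \<in> borel_measurable M"
    and "\<forall>\<omega>\<in>space M. hermitian (Y \<omega>)"
    and "0 < \<alpha>" and "\<alpha> \<le> 2" and "0 < \<gamma>" and "0 \<le> p" and "p \<le> 1"
    and "\<forall>U. unitary U \<longrightarrow>
           distr M borel (\<lambda>\<omega>. U ** Y \<omega> ** cadj U) = distr M borel Y"
    and "\<forall>S. hermitian S \<longrightarrow>
           (CLINT \<omega>|M. iexp (Re (trace (Y \<omega> ** S)))) =
           exp (- complex_of_real \<gamma> *
                (complex_of_real p * nu \<alpha> (Re (trace S) / sqrt (real CARD('n)))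
                 + complex_of_real (1 - p) * nu \<alpha> (- Re (trace S) / sqrt (real CARD('n)))))"
  shows "\<exists>\<mu> :: real measure. prob_space \<mu> \<and> sets \<mu> = sets borel \<and>
           (\<forall>k. char \<mu> k = exp (- complex_of_real \<gamma> *
                 (complex_of_real p * nu \<alpha> k + complex_of_real (1 - p) * nu \<alpha> (- k)))) \<and>
           distr M borel Y =
           distr \<mu> borel (\<lambda>y. (y / sqrt (real CARD('n))) *\<^sub>R (mat 1 :: complex^'n^'n))"
proof -
  interpret prob_space M by fact
  define s where "s = sqrt (real CARD('n))"
  have "s > 0" "s * s = real CARD('n)"
    by (simp_all add: s_def)
  define \<phi> where "\<phi> k = exp (- complex_of_real \<gamma> *
    (complex_of_real p * nu \<alpha> k + complex_of_real (1 - p) * nu \<alpha> (- k)))" for k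
  have char_Y: "(CLINT \<omega>|M. iexp (Re (trace (Y \<omega> ** S)))) = \<phi> (Re (trace S) / s)"
    if "hermitian S" for S
    using assms(10) that by (simp add: \<phi>_def s_def)
  have "AE \<omega> in M. Y \<omega> = (Re (trace (Y \<omega>)) / real CARD('n)) *\<^sub>R mat 1"
    using assms(3) char_Y
    by (intro AE_scalar_if_char_depends_only_on_trace[where \<phi> = "\<lambda>t. \<phi> (t / s)"])
      (auto simp: \<phi>_def nu_0)
  then have "distr M borel Y =
      distr (distr M borel (\<lambda>\<omega>. 1 / s * Re (trace (Y \<omega>)))) borel (\<lambda>y. (y / s) *\<^sub>R mat 1)"
    using assms(2) \<open>s * s = real CARD('n)\<close>
    by (intro distr_eq_distr_distr_if_AE_eq_comp) (auto elim!: eventually_mono)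
  moreover have "char (distr M borel (\<lambda>\<omega>. 1 / s * Re (trace (Y \<omega>)))) k = \<phi> k" for k
  proof -
    have "Re (trace ((k / s) *\<^sub>R mat 1 :: complex^'n^'n)) / s = k"
      using \<open>s > 0\<close> \<open>s * s = real CARD('n)\<close> by (simp add: trace_scaleR trace_I field_simps)
    then show ?thesis
      using char_distr_scaled_trace[OF assms(2), of "1 / s" k]
        char_Y[OF hermitian_scaleR[OF hermitian_mat_1], of "k / s"] by simp
  qed
  ultimately show ?thesis
    using assms(2) unfolding \<phi>_def s_def
    by (intro exI[of _ "distr M borel _"]) (auto intro: prob_space_distr)
qed

end
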